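(* Let $p\geq3$ be a prime, $n\leq p$ and $\xi\in\mathcal{CP}^{\mathsf{s}}_p(n)$. Then \[\#\operatorname{Std}^{\mathsf{s}}_p(\xi)=\begin{cases}\dfrac{n-2u+1}{n-u}\dbinom{n-2}{u-1}, &\text{if } \xi=(p-u,u) \text{ for some } 1\leq u\leq\frac{p-3}{2},\\[6pt] \dfrac{n!}{\prod_{(i,j)\in\xi^{\mathsf{s}}}h^{\mathsf{s}}_\xi(i,j)}, &\text{otherwise}.\end{cases}\]
   Context: $\mathcal{SP}(n)$ is the set of strict partitions of $n$. $\mathcal{CP}^{\mathsf{s}}_p(n)$ is the set of $\xi\in\mathcal{SP}(n)$ with either $1\leq\xi_1\leq\frac{p+1}{2}$, or $\xi_1=p-u$ and $\xi_2\leq u$ for some $1\leq u\leq\frac{p-3}{2}$. The shifted Young diagram of $\xi$ is $\xi^{\mathsf{s}}=\{(i,j):1\leq i\leq\ell(\xi),\ i\leq j\leq i+\xi_i-1\}$. The $(i,j)$-hook of $\xi^{\mathsf{s}}$ consists of $(i,j)$, the nodes of $\xi^{\mathsf{s}}$ in row $i$ to its right, the nodes in column $j$ below it, and additionally, if the diagonal node $(j,j)$ lies in column $j$ of $\xi^{\mathsf{s}}$, all nodes of row $j+1$; $h^{\mathsf{s}}_\xi(i,j)$ is the number of nodes of this hook. A standard shifted tableau of shape $\xi$ is a filling of $\xi^{\mathsf{s}}$ by $1,\dots,n$ increasing along rows and down columns; $\operatorname{Std}^{\mathsf{s}}(\xi)$ is their set and $T_{(i,j)}$ is the entry in node $(i,j)$.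 For $\xi\in\mathcal{CP}^{\mathsf{s}}_p(n)$: if $\xi_1=p-u$ and $\xi_2=u$ for some $1\leq u\leq\frac{p-3}{2}$, then $\operatorname{Std}^{\mathsf{s}}_p(\xi)=\{T\in\operatorname{Std}^{\mathsf{s}}(\xi): T_{(2,\xi_2+1)}>T_{(1,\xi_1)}\}$; otherwise $\operatorname{Std}^{\mathsf{s}}_p(\xi)=\operatorname{Std}^{\mathsf{s}}(\xi)$. *)

theory Defs
  imports Complex_Main "HOL-Computational_Algebra.Primes"
begin

text \<open>A partition is a list of its parts, xi = [xi_1, xi_2, ...].
  part xi i is xi_i (1-based), with the convention xi_i = 0 for i > length xi.\<close>

definition part :: "nat list \<Rightarrow> nat \<Rightarrow> nat" where
  "part \<xi> i = (if 1 \<le> i \<and> i \<le> length \<xi> then \<xi> ! (i - 1) else 0)"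

definition SP :: "nat \<Rightarrow> nat list set" where
  "SP n = {\<xi>. sorted_wrt (>) \<xi> \<and> 0 \<notin> set \<xi> \<and> sum_list \<xi> = n}"

definition CPs :: "nat \<Rightarrow> nat \<Rightarrow> nat list set" where
  "CPs p n = {\<xi> \<in> SP n.
     (1 \<le> part \<xi> 1 \<and> 2 * part \<xi> 1 \<le> p + 1) \<or>
     (\<exists>u. 1 \<le> u \<and> 2 * u + 3 \<le> p \<and> part \<xi> 1 = p - u \<and> part \<xi> 2 \<le> u)}"

definition shifted_diagram :: "nat list \<Rightarrow> (nat \<times> nat) set" where
  "shifted_diagram \<xi> = {(i, j). 1 \<le> i \<and> i \<le> length \<xi> \<and> i \<le> j \<and> j \<le> i + part \<xi> i - 1}"

definition shifted_hook :: "nat list \<Rightarrow> nat \<Rightarrow> nat \<Rightarrow> (nat \<times> nat) set" where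
  "shifted_hook \<xi> i j =
     {(i, j)}
     \<union> {(a, b) \<in> shifted_diagram \<xi>. a = i \<and> b > j}
     \<union> {(a, b) \<in> shifted_diagram \<xi>. b = j \<and> a > i}
     \<union> (if (j, j) \<in> shifted_diagram \<xi> then {(a, b) \<in> shifted_diagram \<xi>. a = j + 1} else {})"

definition shifted_hook_length :: "nat list \<Rightarrow> nat \<Rightarrow> nat \<Rightarrow> nat" where
  "shifted_hook_length \<xi> i j = card (shifted_hook \<xi> i j)"

definition Std_s :: "nat list \<Rightarrow> ((nat \<times> nat) \<Rightarrow> nat) set" where
  "Std_s \<xi> = {T. bij_betw T (shifted_diagram \<xi>) {1..sum_list \<xi>}
      \<and> (\<forall>x. x \<notin> shifted_diagram \<xi> \<longrightarrow> T x = 0)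
      \<and> (\<forall>i j j'. (i, j) \<in> shifted_diagram \<xi> \<longrightarrow> (i, j') \<in> shifted_diagram \<xi> \<longrightarrow> j < j'
                 \<longrightarrow> T (i, j) < T (i, j'))
      \<and> (\<forall>i i' j. (i, j) \<in> shifted_diagram \<xi> \<longrightarrow> (i', j) \<in> shifted_diagram \<xi> \<longrightarrow> i < i'
                 \<longrightarrow> T (i, j) < T (i', j))}"

definition Std_s_p :: "nat \<Rightarrow> nat list \<Rightarrow> ((nat \<times> nat) \<Rightarrow> nat) set" where
  "Std_s_p p \<xi> =
     (if \<exists>u. 1 \<le> u \<and> 2 * u + 3 \<le> p \<and> part \<xi> 1 = p - u \<and> part \<xi> 2 = u
      then {T \<in> Std_s \<xi>. T (2, part \<xi> 2 + 1) > T (1, part \<xi> 1)}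
      else Std_s \<xi>)"

end

(*
  The number of standard shifted tableaux of a strict partition with set of parts S is Schur's
  g(S) = |S|! / (prod of s!) * (prod over t < s in S of (s - t) / (s + t)).  Both sides satisfy the
  recursion obtained by deleting the cell holding the largest entry: that cell ends a row whose
  length s has s - 1 not a part, and deleting it replaces s by s - 1.  For g the recursion is the
  rational identity  sum_x x * prod_(y <> x) (x - y - 1)(x + y) / ((x - y)(x + y - 1)) = sum_x x,
  which follows by Lagrange interpolation at the nodes x^2 - x.
  Peeling off the first row, of length a, whose hook lengths are {1..a} with the values
  a - xi_r replaced by a + xi_r, shows that the shifted hook product equals
  (prod of s!) / (prod over t < s of (s - t) / (s + t)); this is the shifted hook length formula.
  For xi = (p - u, u) the extra condition says that the largest entry ends the second row, so the
  count is g({p - u, u - 1}).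
*)

theory Submission
  imports Defs "HOL-Computational_Algebra.Polynomial" "HOL-Library.FuncSet"
begin

section \<open>Lagrange interpolation and a rational identity\<close>

lemma monic_prod_linear_factors:
  fixes a :: "'b \<Rightarrow> 'a::idom"
  assumes "finite X"
  shows "degree (\<Prod>x\<in>X. [:- a x, 1:]) = card X" "coeff (\<Prod>x\<in>X. [:- a x, 1:]) (card X) = 1"
proof -
  show deg: "degree (\<Prod>x\<in>X. [:- a x, 1:]) = card X"
    using assms by (simp add: degree_prod_eq_sum_degree)
  show "coeff (\<Prod>x\<in>X. [:- a x, 1:]) (card X) = 1"
    using lead_coeff_prod[of "\<lambda>x. [:- a x, 1:]" X] unfolding deg by simp
qed

lemma lagrange_sum_eq_coeff:
  fixes f :: "'a::field poly" and x :: "'b \<Rightarrow> 'a"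
  assumes fin: "finite I" and inj: "inj_on x I" and card: "card I = Suc m" and deg: "degree f \<le> m"
  shows "(\<Sum>i\<in>I. poly f (x i) / (\<Prod>j\<in>I-{i}. x i - x j)) = coeff f m"
proof -
  define w where "w i = poly f (x i) / (\<Prod>j\<in>I-{i}. x i - x j)" for i
  define b where "b i = (\<Prod>j\<in>I-{i}. [:- x j, 1:])" for i
  define L where "L = (\<Sum>i\<in>I. smult (w i) (b i))"
  have deg_b: "degree (b i) = m" and lead_b: "coeff (b i) m = 1" if "i \<in> I" for i
  proof -
    have "card (I - {i}) = m" using that fin card by simp
    then show "degree (b i) = m" "coeff (b i) m = 1"
      using monic_prod_linear_factors[of "I - {i}" x] fin unfolding b_def by simp_all
  qed
  have nonzero: "(\<Prod>j\<in>I-{i}. x i - x j) \<noteq> 0" if "i \<in> I" for i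
  proof -
    have "x i - x j \<noteq> 0" if "j \<in> I - {i}" for j
      using inj_onD[OF inj, of i j] \<open>i \<in> I\<close> that by auto
    then show ?thesis using fin by (simp add: prod_zero_iff)
  qed
  have poly_L: "poly L (x i) = poly f (x i)" if i: "i \<in> I" for i
  proof -
    have vanish: "poly (b k) (x i) = 0" if "k \<in> I - {i}" for k
      unfolding b_def poly_prod using fin i that by (auto intro: prod_zero)
    have "poly L (x i) = w i * poly (b i) (x i)"
      unfolding L_def poly_sum using vanish by (simp add: sum.remove[OF fin i])
    also have "\<dots> = poly f (x i)"
      using nonzero[OF i] unfolding w_def b_def poly_prod by simp
    finally show ?thesis .
  qed
  have "degree L \<le> m"
    unfolding L_def by (rule degree_sum_le) (use fin deg_b in \<open>auto intro: order.trans[OF degree_smult_le]\<close>)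
  then have "L = f"
    using poly_L deg card fin inj
    by (intro poly_eqI_degree[of "x ` I"]) (auto simp: card_image)
  then have "coeff f m = coeff L m" by simp
  also have "\<dots> = (\<Sum>i\<in>I. w i * coeff (b i) m)"
    unfolding L_def by (simp add: coeff_sum)
  finally show ?thesis using lead_b by (simp add: w_def)
qed

lemma coeff_prod_linear_factors:
  fixes a :: "'b \<Rightarrow> 'a::idom"
  assumes "finite X" "X \<noteq> {}"
  shows "coeff (\<Prod>x\<in>X. [:- a x, 1:]) (card X - 1) = - (\<Sum>x\<in>X. a x)"
  using assms
proof (induction X rule: finite_ne_induct)
  case (singleton x)
  then show ?case by simp
next
  case (insert x X)
  define P where "P = (\<Prod>x\<in>X. [:- a x, 1:])"
  have "coeff P (card X) = 1" "card X \<noteq> 0"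
    using monic_prod_linear_factors[OF insert.hyps(1)] insert.hyps(1,2) by (simp_all add: P_def)
  then have "coeff ([:- a x, 1:] * P) (card X) = - a x + coeff P (card X - 1)"
    by (cases "card X") simp_all
  then show ?case using insert by (simp add: P_def)
qed

lemma degree_prod_linear_factors_diff:
  fixes a b :: "'b \<Rightarrow> 'a::idom"
  assumes "finite X"
  shows "degree ((\<Prod>x\<in>X. [:- a x, 1:]) - (\<Prod>x\<in>X. [:- b x, 1:])) \<le> card X - 1"
proof (rule degree_le, intro allI impI)
  fix i assume "card X - 1 < i"
  then have "i = card X \<or> card X < i" by linarith
  then show "coeff ((\<Prod>x\<in>X. [:- a x, 1:]) - (\<Prod>x\<in>X. [:- b x, 1:])) i = 0"
    using monic_prod_linear_factors[OF assms, of a] monic_prod_linear_factors[OF assms, of b]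
    by (auto simp: coeff_eq_0)
qed

lemma sum_prod_sub_div_prod_diff:
  fixes t c :: "'b \<Rightarrow> 'a::field"
  assumes fin: "finite I" and nonempty: "I \<noteq> {}" and inj: "inj_on t I"
  shows "(\<Sum>i\<in>I. (\<Prod>j\<in>I. t i - t j - c j) / (\<Prod>j\<in>I-{i}. t i - t j)) = - (\<Sum>j\<in>I. c j)"
proof -
  define f where "f = (\<Prod>j\<in>I. [:- (t j + c j), 1:]) - (\<Prod>j\<in>I. [:- t j, 1:])"
  have "poly f (t i) = (\<Prod>j\<in>I. t i - t j - c j)" if "i \<in> I" for i
  proof -
    have "poly (\<Prod>j\<in>I. [:- t j, 1:]) (t i) = 0"
      unfolding poly_prod using fin that by (auto intro: prod_zero)
    then show ?thesis unfolding f_def by (simp add: poly_prod algebra_simps)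
  qed
  then have "(\<Sum>i\<in>I. (\<Prod>j\<in>I. t i - t j - c j) / (\<Prod>j\<in>I-{i}. t i - t j)) = coeff f (card I - 1)"
    using lagrange_sum_eq_coeff[OF fin inj, of "card I - 1" f] fin nonempty
      degree_prod_linear_factors_diff[OF fin, of "\<lambda>j. t j + c j" t]
    by (simp add: f_def card_gt_0_iff)
  also have "\<dots> = - (\<Sum>j\<in>I. c j)"
    using coeff_prod_linear_factors[OF fin nonempty, of "\<lambda>j. t j + c j"]
      coeff_prod_linear_factors[OF fin nonempty, of t]
    by (simp add: f_def sum.distrib)
  finally show ?thesis .
qed

definition schur_shift_ratio :: "'a::field \<Rightarrow> 'a \<Rightarrow> 'a" where
  "schur_shift_ratio x y = (x - y - 1) * (x + y) / ((x - y) * (x + y - 1))"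

text \<open>With \<open>t x = x\<^sup>2 - x\<close> the ratio is \<open>(t x - t y - 2y) / (t x - t y)\<close>, so this is the
  case \<open>c = 2x\<close> of the interpolation identity above.\<close>
lemma sum_mult_prod_schur_shift_ratio:
  fixes x :: "'b \<Rightarrow> 'a::field_char_0"
  assumes fin: "finite I"
    and distinct: "\<And>i j. i \<in> I \<Longrightarrow> j \<in> I \<Longrightarrow> i \<noteq> j \<Longrightarrow> x i \<noteq> x j \<and> x i + x j \<noteq> 1"
  shows "(\<Sum>i\<in>I. x i * (\<Prod>j\<in>I-{i}. schur_shift_ratio (x i) (x j))) = (\<Sum>i\<in>I. x i)"
proof (cases "I = {}")
  case False
  define t where "t i = x i * x i - x i" for i
  have t_diff: "t i - t j = (x i - x j) * (x i + x j - 1)" for i j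
    by (simp add: t_def algebra_simps)
  have t_diff_nonzero: "t i - t j \<noteq> 0" if "i \<in> I" "j \<in> I" "i \<noteq> j" for i j
    using distinct[OF that] unfolding t_diff by simp
  have summand: "(\<Prod>j\<in>I. t i - t j - 2 * x j) / (\<Prod>j\<in>I-{i}. t i - t j)
      = - 2 * (x i * (\<Prod>j\<in>I-{i}. schur_shift_ratio (x i) (x j)))" if i: "i \<in> I" for i
  proof -
    have "schur_shift_ratio (x i) (x j) = (t i - t j - 2 * x j) / (t i - t j)" if "j \<in> I - {i}" for j
    proof -
      have "t i - t j - 2 * x j = (x i - x j - 1) * (x i + x j)"
        by (simp add: t_def algebra_simps)
      then show ?thesis unfolding schur_shift_ratio_def t_diff by simp
    qed
    then have "(\<Prod>j\<in>I-{i}. schur_shift_ratio (x i) (x j))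
        = (\<Prod>j\<in>I-{i}. t i - t j - 2 * x j) / (\<Prod>j\<in>I-{i}. t i - t j)"
      by (simp add: prod_dividef)
    then show ?thesis by (simp add: prod.remove[OF fin i])
  qed
  have "inj_on t I" using t_diff_nonzero by (auto simp: inj_on_def)
  from sum_prod_sub_div_prod_diff[OF fin False this, of "\<lambda>j. 2 * x j"]
  have "- 2 * (\<Sum>i\<in>I. x i * (\<Prod>j\<in>I-{i}. schur_shift_ratio (x i) (x j))) = - 2 * (\<Sum>i\<in>I. x i)"
    by (simp add: summand sum_distrib_left sum_negf)
  then show ?thesis by simp
qed simp

section \<open>Schur's formula\<close>

definition schur_pair_prod :: "nat set \<Rightarrow> real" where
  "schur_pair_prod S = (\<Prod>s\<in>S. \<Prod>t\<in>{t\<in>S. t < s}. (real s - real t) / (real s + real t))"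

definition schur_formula :: "nat set \<Rightarrow> real" where
  "schur_formula S = fact (\<Sum>S) / (\<Prod>s\<in>S. fact s) * schur_pair_prod S"

lemma schur_pair_prod_insert:
  assumes fin: "finite S" and x: "x \<notin> S"
  shows "schur_pair_prod (insert x S)
    = schur_pair_prod S * (\<Prod>t\<in>S. \<bar>real x - real t\<bar> / (real x + real t))"
proof -
  define q where "q s t = (real s - real t) / (real s + real t)" for s t :: nat
  have row: "(\<Prod>t\<in>{t\<in>insert x S. t < s}. q s t) = (if x < s then q s x else 1) * (\<Prod>t\<in>{t\<in>S. t < s}. q s t)"
    for s
  proof (cases "x < s")
    case True
    then have "{t\<in>insert x S. t < s} = insert x {t\<in>S. t < s}" by auto
    then show ?thesis using True x fin by simp
  next
    case False
    then have "{t\<in>insert x S. t < s} = {t\<in>S. t < s}" by auto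
    then show ?thesis using False by simp
  qed
  have "schur_pair_prod (insert x S)
      = (\<Prod>t\<in>{t\<in>S. t < x}. q x t) * (\<Prod>s\<in>S. \<Prod>t\<in>{t\<in>insert x S. t < s}. q s t)"
  proof -
    have "{t\<in>insert x S. t < x} = {t\<in>S. t < x}" by auto
    then show ?thesis unfolding schur_pair_prod_def q_def using fin x by simp
  qed
  also have "(\<Prod>s\<in>S. \<Prod>t\<in>{t\<in>insert x S. t < s}. q s t)
      = (\<Prod>s\<in>S. (if x < s then q s x else 1) * (\<Prod>t\<in>{t\<in>S. t < s}. q s t))"
    by (rule prod.cong[OF refl row])
  also have "\<dots> = (\<Prod>s\<in>{s\<in>S. x < s}. q s x) * schur_pair_prod S"
    unfolding prod.distrib schur_pair_prod_def q_def using fin by (simp add: prod.If_cases Int_def)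
  finally have split: "schur_pair_prod (insert x S)
      = schur_pair_prod S * ((\<Prod>t\<in>{t\<in>S. t < x}. q x t) * (\<Prod>s\<in>{s\<in>S. x < s}. q s x))"
    by (simp add: algebra_simps)
  have "(\<Prod>t\<in>S. \<bar>real x - real t\<bar> / (real x + real t)) = (\<Prod>t\<in>S. if t < x then q x t else q t x)"
    by (rule prod.cong) (auto simp: q_def add.commute)
  also have "\<dots> = (\<Prod>t\<in>{t\<in>S. t < x}. q x t) * (\<Prod>s\<in>{s\<in>S. x < s}. q s x)"
  proof -
    have "S \<inter> - {t. t < x} = {s\<in>S. x < s}" using x by (auto simp: not_less order.order_iff_strict)
    then show ?thesis using fin by (simp add: prod.If_cases Int_def)
  qed
  finally show ?thesis unfolding split by simp
qed

lemma schur_formula_insert_0: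
  assumes "finite S" "0 \<notin> S"
  shows "schur_formula (insert 0 S) = schur_formula S"
proof -
  have "(\<Prod>t\<in>S. \<bar>real 0 - real t\<bar> / (real 0 + real t)) = 1"
    using assms(2) by (intro prod.neutral) (auto intro!: gr0I)
  then show ?thesis
    unfolding schur_formula_def using assms schur_pair_prod_insert[OF assms] by simp
qed

lemma schur_ratio_decrement:
  fixes s t :: nat
  assumes "t \<noteq> s" "t \<noteq> s - 1" "1 \<le> t" "1 \<le> s"
  shows "\<bar>real (s - 1) - real t\<bar> / (real (s - 1) + real t)
       = \<bar>real s - real t\<bar> / (real s + real t) * schur_shift_ratio (real s) (real t)"
proof -
  have ratio: "\<bar>d - 1\<bar> / (a - 1) = \<bar>d\<bar> / a * ((d - 1) * a / (d * (a - 1)))"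
    if "d \<le> -1 \<or> 2 \<le> d" "a \<noteq> 0" "a - 1 \<noteq> 0" for d a :: real
  proof (cases "d \<ge> 2")
    case True
    then have "\<bar>d - 1\<bar> = d - 1" "\<bar>d\<bar> = d" by auto
    then show ?thesis using True that by (simp add: field_simps)
  next
    case False
    then have "\<bar>d - 1\<bar> = 1 - d" "\<bar>d\<bar> = - d" "d \<noteq> 0" using that by auto
    then show ?thesis using that by (simp add: field_simps)
  qed
  have "real s - real t \<le> -1 \<or> 2 \<le> real s - real t"
    using assms by (cases "t < s") linarith+
  moreover have "real (s - 1) - real t = (real s - real t) - 1"
    and "real (s - 1) + real t = (real s + real t) - 1"
    using assms by (simp_all add: of_nat_diff)
  ultimately show ?thesis
    unfolding schur_shift_ratio_def using assms by (simp only:) (rule ratio; simp)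
qed

lemma schur_formula_decrement:
  assumes fin: "finite R" and R: "0 \<notin> R" "s \<notin> R" "s - 1 \<notin> R" and s: "1 \<le> s"
  shows "schur_formula (insert (s - 1) R)
    = schur_formula (insert s R) * real s / real (s + \<Sum>R) * (\<Prod>t\<in>R. schur_shift_ratio (real s) (real t))"
proof -
  define F where "F = (\<Prod>t\<in>R. fact t :: real)"
  define Q where "Q = (\<Prod>t\<in>R. \<bar>real s - real t\<bar> / (real s + real t))"
  define A where "A = (\<Prod>t\<in>R. schur_shift_ratio (real s) (real t))"
  have "(\<Prod>t\<in>R. \<bar>real (s - 1) - real t\<bar> / (real (s - 1) + real t)) = Q * A"
    unfolding Q_def A_def prod.distrib[symmetric]
    by (rule prod.cong[OF refl], rule schur_ratio_decrement) (use R s in \<open>auto simp: Suc_le_eq intro!: gr0I\<close>)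
  then have decr: "schur_formula (insert (s - 1) R)
      = fact (s - 1 + \<Sum>R) / (fact (s - 1) * F) * (schur_pair_prod R * (Q * A))"
    unfolding schur_formula_def F_def using fin R by (simp add: schur_pair_prod_insert)
  have orig: "schur_formula (insert s R) = fact (s + \<Sum>R) / (fact s * F) * (schur_pair_prod R * Q)"
    unfolding schur_formula_def F_def Q_def using fin R by (simp add: schur_pair_prod_insert)
  define N where "N = real (s + \<Sum>R)"
  have "s + \<Sum>R = Suc (s - 1 + \<Sum>R)" using s by simp
  then have "fact (s + \<Sum>R) = N * fact (s - 1 + \<Sum>R)"
    unfolding N_def by (metis fact_Suc of_nat_fact)
  moreover have "fact s = real s * fact (s - 1)" using s by (simp add: fact_reduce)
  moreover have "F \<noteq> 0" "real s \<noteq> 0" unfolding F_def using fin s by auto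
  moreover have "N \<noteq> 0" unfolding N_def using s by (simp only: of_nat_eq_0_iff)
  ultimately show ?thesis
    unfolding decr orig A_def[symmetric] N_def[symmetric] by (simp add: field_simps)
qed

lemma schur_formula_recursion:
  assumes fin: "finite S" and nonempty: "S \<noteq> {}" and pos: "0 \<notin> S"
  shows "(\<Sum>s\<in>{s\<in>S. s - 1 \<notin> S}. schur_formula (insert (s - 1) (S - {s}))) = schur_formula S"
proof -
  define Q where "Q s = (\<Prod>t\<in>S-{s}. schur_shift_ratio (real s) (real t))" for s
  have N: "(\<Sum>s\<in>S. real s) > 0"
    using fin nonempty pos by (metis gr0I of_nat_0_less_iff sum_pos)
  have summand: "schur_formula (insert (s - 1) (S - {s})) = schur_formula S * real s / (\<Sum>s\<in>S. real s) * Q s"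
    if "s \<in> S" "s - 1 \<notin> S" for s
  proof -
    have "insert s (S - {s}) = S" "s + \<Sum>(S - {s}) = \<Sum>S"
      using that fin by (auto simp: sum.remove)
    then show ?thesis
      unfolding Q_def using schur_formula_decrement[of "S - {s}" s] fin pos that
      by (cases s) auto
  qed
  have vanish: "Q s = 0" if "s \<in> S" "s - 1 \<in> S" for s
  proof -
    have "s \<noteq> 0" "s - 1 \<noteq> 0" using that pos by metis+
    then have "s - 1 \<in> S - {s}" "schur_shift_ratio (real s) (real (s - 1)) = 0"
      using that by (auto simp: schur_shift_ratio_def of_nat_diff)
    then show ?thesis unfolding Q_def using fin by (auto simp: prod_zero_iff)
  qed
  have "(\<Sum>s\<in>{s\<in>S. s - 1 \<notin> S}. schur_formula (insert (s - 1) (S - {s})))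
      = (\<Sum>s\<in>{s\<in>S. s - 1 \<notin> S}. schur_formula S * real s / (\<Sum>s\<in>S. real s) * Q s)"
    by (rule sum.cong[OF refl], rule summand) auto
  also have "\<dots> = (\<Sum>s\<in>S. schur_formula S * real s / (\<Sum>s\<in>S. real s) * Q s)"
    by (rule sum.mono_neutral_left) (use fin vanish in auto)
  also have "\<dots> = schur_formula S / (\<Sum>s\<in>S. real s) * (\<Sum>s\<in>S. real s * Q s)"
    by (simp add: sum_distrib_left algebra_simps)
  also have "(\<Sum>s\<in>S. real s * Q s) = (\<Sum>s\<in>S. real s)"
    unfolding Q_def
  proof (rule sum_mult_prod_schur_shift_ratio[OF fin])
    fix i j assume "i \<in> S" "j \<in> S" "i \<noteq> j"
    moreover have "i + j \<noteq> 1" using pos \<open>i \<in> S\<close> \<open>j \<in> S\<close> by (cases i; cases j) auto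
    ultimately show "real i \<noteq> real j \<and> real i + real j \<noteq> 1"
      by (simp flip: of_nat_add)
  qed
  finally show ?thesis using N by simp
qed

section \<open>Strict partitions and shifted diagrams\<close>

definition strict_partition :: "nat list \<Rightarrow> bool" where
  "strict_partition \<xi> \<longleftrightarrow> sorted_wrt (>) \<xi> \<and> 0 \<notin> set \<xi>"

lemma SP_iff: "\<xi> \<in> SP n \<longleftrightarrow> strict_partition \<xi> \<and> sum_list \<xi> = n"
  unfolding SP_def strict_partition_def by auto

lemma strict_partition_Cons: "strict_partition (a # \<xi>) \<Longrightarrow> strict_partition \<xi>"
  unfolding strict_partition_def by simp

lemma strict_partition_nth_less:
  "strict_partition \<xi> \<Longrightarrow> i < j \<Longrightarrow> j < length \<xi> \<Longrightarrow> \<xi> ! j < \<xi> ! i"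
  unfolding strict_partition_def using sorted_wrt_nth_less by fastforce

lemma strict_partition_distinct: "strict_partition \<xi> \<Longrightarrow> distinct \<xi>"
  unfolding distinct_conv_nth by (metis linorder_neq_iff strict_partition_nth_less order_less_irrefl)

lemma strict_partition_nth_pos: "strict_partition \<xi> \<Longrightarrow> k < length \<xi> \<Longrightarrow> 1 \<le> \<xi> ! k"
  unfolding strict_partition_def by (metis nth_mem less_one not_le)

lemma strict_partition_nth_gap:
  assumes "strict_partition \<xi>" "a \<le> b" "b < length \<xi>"
  shows "\<xi> ! b + (b - a) \<le> \<xi> ! a"
  using assms(2,3)
proof (induction b rule: dec_induct)
  case (step b)
  then show ?case using strict_partition_nth_less[OF assms(1), of b "Suc b"] by simp
qed simp

lemma strict_partition_pred_part:
  assumes st: "strict_partition \<xi>" and k: "k < length \<xi>" and m: "m < length \<xi>"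
    and pred: "\<xi> ! m = \<xi> ! k - 1" and pos: "1 \<le> \<xi> ! k"
  shows "m = Suc k"
proof (rule ccontr)
  assume "m \<noteq> Suc k"
  then consider "m \<le> k" | "Suc k < m" by linarith
  then show False
  proof cases
    case 1
    then have "\<xi> ! k \<le> \<xi> ! m"
      using strict_partition_nth_less[OF st, of m k] k by (cases "m = k") auto
    then show False using pred pos by linarith
  next
    case 2
    then have "\<xi> ! m < \<xi> ! Suc k" "\<xi> ! Suc k < \<xi> ! k"
      using m strict_partition_nth_less[OF st, of "Suc k" m] strict_partition_nth_less[OF st, of k "Suc k"]
      by auto
    then show False using pred by linarith
  qed
qed

lemma part_nth: "1 \<le> i \<Longrightarrow> i \<le> length \<xi> \<Longrightarrow> part \<xi> i = \<xi> ! (i - 1)"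
  unfolding part_def by simp

lemma strict_partition_part_pos: "strict_partition \<xi> \<Longrightarrow> 1 \<le> r \<Longrightarrow> r \<le> length \<xi> \<Longrightarrow> 1 \<le> part \<xi> r"
  using strict_partition_nth_pos[of \<xi> "r - 1"] by (simp add: part_nth)

lemma strict_partition_part_gap:
  assumes "strict_partition \<xi>" "1 \<le> r" "r \<le> r'" "r' \<le> length \<xi>"
  shows "part \<xi> r' + (r' - r) \<le> part \<xi> r"
  using strict_partition_nth_gap[OF assms(1), of "r - 1" "r' - 1"] assms by (simp add: part_nth)

lemma strict_partition_Cons_part_less:
  "strict_partition (a # \<xi>) \<Longrightarrow> 1 \<le> r \<Longrightarrow> r \<le> length \<xi> \<Longrightarrow> part \<xi> r < a"
  by (simp add: strict_partition_def part_nth)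

lemma strict_partition_Cons_length_less:
  assumes "strict_partition (a # \<xi>)"
  shows "length \<xi> < a"
proof (cases "\<xi> = []")
  case True
  then show ?thesis using assms by (simp add: strict_partition_def)
next
  case False
  have st: "strict_partition \<xi>" using strict_partition_Cons[OF assms] .
  have "part \<xi> (length \<xi>) + (length \<xi> - 1) \<le> part \<xi> 1"
    using strict_partition_part_gap[OF st, of 1 "length \<xi>"] False by (simp add: Suc_le_eq)
  moreover have "1 \<le> length \<xi>" using False by (simp add: Suc_le_eq)
  then have "1 \<le> part \<xi> (length \<xi>)" "part \<xi> 1 < a"
    using strict_partition_part_pos[OF st, of "length \<xi>"] strict_partition_Cons_part_less[OF assms, of 1]
    by simp_all
  ultimately show ?thesis by linarith
qed

lemma bij_betw_part_set:
  assumes "strict_partition \<xi>"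
  shows "bij_betw (part \<xi>) {1..length \<xi>} (set \<xi>)"
proof (rule bij_betw_imageI)
  show "inj_on (part \<xi>) {1..length \<xi>}"
    using nth_eq_iff_index_eq[OF strict_partition_distinct[OF assms]]
    by (auto simp: inj_on_def part_nth)
  show "part \<xi> ` {1..length \<xi>} = set \<xi>"
  proof (intro equalityI subsetI)
    fix x assume "x \<in> set \<xi>"
    then obtain k where "k < length \<xi>" "x = part \<xi> (Suc k)" by (auto simp: in_set_conv_nth part_nth)
    then show "x \<in> part \<xi> ` {1..length \<xi>}" by force
  qed (auto simp: part_nth)
qed

lemma mem_shifted_diagram:
  "(i, j) \<in> shifted_diagram \<xi> \<longleftrightarrow> 1 \<le> i \<and> i \<le> length \<xi> \<and> i \<le> j \<and> j \<le> i + part \<xi> i - 1"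
  unfolding shifted_diagram_def by simp

lemma part_le_sum_list: "part \<xi> i \<le> sum_list \<xi>"
  unfolding part_def by (auto intro: elem_le_sum_list)

lemma shifted_diagram_Nil: "shifted_diagram [] = {}"
  by (auto simp: shifted_diagram_def)

lemma finite_shifted_diagram: "finite (shifted_diagram \<xi>)"
proof (rule finite_subset)
  have "(i, j) \<in> {1..length \<xi>} \<times> {0..length \<xi> + sum_list \<xi>}" if "(i, j) \<in> shifted_diagram \<xi>" for i j
    using that part_le_sum_list[of \<xi> i] by (auto simp: mem_shifted_diagram)
  then show "shifted_diagram \<xi> \<subseteq> {1..length \<xi>} \<times> {0..length \<xi> + sum_list \<xi>}"
    by auto
qed simp

section \<open>Standard shifted tableaux\<close>

lemma Std_s_range:
  assumes "T \<in> Std_s \<xi>" "x \<in> shifted_diagram \<xi>"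
  shows "T x \<in> {1..sum_list \<xi>}"
  using assms unfolding Std_s_def bij_betw_def by auto

lemma finite_Std_s: "finite (Std_s \<xi>)"
proof -
  have "inj_on (\<lambda>T. restrict T (shifted_diagram \<xi>)) (Std_s \<xi>)"
  proof (rule inj_onI, rule ext)
    fix T T' x assume T: "T \<in> Std_s \<xi>" "T' \<in> Std_s \<xi>"
      and eq: "restrict T (shifted_diagram \<xi>) = restrict T' (shifted_diagram \<xi>)"
    show "T x = T' x"
    proof (cases "x \<in> shifted_diagram \<xi>")
      case True
      then show ?thesis using fun_cong[OF eq, of x] by simp
    next
      case False
      then show ?thesis using T unfolding Std_s_def by (cases x) auto
    qed
  qed
  moreover have "(\<lambda>T. restrict T (shifted_diagram \<xi>)) ` Std_s \<xi>
      \<subseteq> shifted_diagram \<xi> \<rightarrow>\<^sub>E {1..sum_list \<xi>}"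
    using Std_s_range by fastforce
  then have "finite ((\<lambda>T. restrict T (shifted_diagram \<xi>)) ` Std_s \<xi>)"
    by (rule finite_subset) (intro finite_PiE finite_shifted_diagram; simp)
  ultimately show ?thesis by (rule finite_imageD[rotated])
qed

definition is_corner :: "nat list \<Rightarrow> nat \<times> nat \<Rightarrow> bool" where
  "is_corner \<xi> c \<longleftrightarrow>
     (\<forall>i j. (i, j) \<in> shifted_diagram \<xi> \<longrightarrow> (i = fst c \<longrightarrow> j \<le> snd c) \<and> (j = snd c \<longrightarrow> i \<le> fst c))"

lemma Std_s_max_is_corner:
  assumes T: "T \<in> Std_s \<xi>" and c: "c \<in> shifted_diagram \<xi>" and max: "T c = sum_list \<xi>"
  shows "is_corner \<xi> c"
  unfolding is_corner_def
proof (intro allI impI conjI)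
  fix i j assume ij: "(i, j) \<in> shifted_diagram \<xi>"
  then have "\<not> T c < T (i, j)" using Std_s_range[OF T ij] max by simp
  then show "i = fst c \<Longrightarrow> j \<le> snd c" "j = snd c \<Longrightarrow> i \<le> fst c"
    using T ij c unfolding Std_s_def by (cases c; force)+
qed

lemma Std_s_remove_max:
  assumes T: "T \<in> Std_s \<xi>" and max: "T c = sum_list \<xi>" and c: "c \<in> shifted_diagram \<xi>"
    and diagram: "shifted_diagram \<xi>' = shifted_diagram \<xi> - {c}"
    and size: "sum_list \<xi> = Suc (sum_list \<xi>')"
  shows "T(c := 0) \<in> Std_s \<xi>'"
proof -
  have "bij_betw T (shifted_diagram \<xi> - {c}) ({1..sum_list \<xi>} - {sum_list \<xi>})"
    using T c max size by (intro bij_betw_DiffI) (auto simp: Std_s_def)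
  moreover have "{1..sum_list \<xi>} - {sum_list \<xi>} = {1..sum_list \<xi>'}" using size by auto
  ultimately have "bij_betw T (shifted_diagram \<xi>') {1..sum_list \<xi>'}"
    unfolding diagram by simp
  then have "bij_betw (T(c := 0)) (shifted_diagram \<xi>') {1..sum_list \<xi>'}"
    by (rule bij_betw_cong[THEN iffD1, rotated]) (simp add: diagram)
  then show ?thesis using T unfolding Std_s_def diagram by auto
qed

lemma Std_s_insert_max:
  assumes T: "T \<in> Std_s \<xi>'" and c: "c \<in> shifted_diagram \<xi>" "is_corner \<xi> c"
    and diagram: "shifted_diagram \<xi>' = shifted_diagram \<xi> - {c}"
    and size: "sum_list \<xi> = Suc (sum_list \<xi>')"
  shows "T(c := sum_list \<xi>) \<in> Std_s \<xi>"
proof -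
  define T' where "T' = T(c := sum_list \<xi>)"
  have less: "T x < sum_list \<xi>" if "x \<in> shifted_diagram \<xi>'" for x
    using Std_s_range[OF T that] size by simp
  have "bij_betw T (shifted_diagram \<xi>') {1..sum_list \<xi>'}" using T by (simp add: Std_s_def)
  then have "bij_betw T' (shifted_diagram \<xi>') {1..sum_list \<xi>'}"
    by (rule bij_betw_cong[THEN iffD1, rotated]) (auto simp: T'_def diagram)
  then have "bij_betw T' (shifted_diagram \<xi>' \<union> {c}) ({1..sum_list \<xi>'} \<union> {sum_list \<xi>})"
    by (rule bij_betw_combine) (use size in \<open>auto simp: T'_def diagram\<close>)
  moreover have "shifted_diagram \<xi>' \<union> {c} = shifted_diagram \<xi>" "{1..sum_list \<xi>'} \<union> {sum_list \<xi>} = {1..sum_list \<xi>}"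
    using c size by (auto simp: diagram)
  ultimately have bij: "bij_betw T' (shifted_diagram \<xi>) {1..sum_list \<xi>}" by simp
  have row: "T' (i, j) < T' (i, j')"
    if "(i, j) \<in> shifted_diagram \<xi>" "(i, j') \<in> shifted_diagram \<xi>" "j < j'" for i j j'
    using that c T less unfolding T'_def Std_s_def is_corner_def diagram by (cases c) fastforce
  have col: "T' (i, j) < T' (i', j)"
    if "(i, j) \<in> shifted_diagram \<xi>" "(i', j) \<in> shifted_diagram \<xi>" "i < i'" for i i' j
    using that c T less unfolding T'_def Std_s_def is_corner_def diagram by (cases c) fastforce
  have "T' x = 0" if "x \<notin> shifted_diagram \<xi>" for x
    using that c T unfolding T'_def Std_s_def diagram by (cases x) auto
  with bij row col show ?thesis unfolding T'_def[symmetric] Std_s_def by blast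
qed

lemma card_Std_s_max_at_corner:
  assumes "c \<in> shifted_diagram \<xi>" "is_corner \<xi> c"
    and "shifted_diagram \<xi>' = shifted_diagram \<xi> - {c}" "sum_list \<xi> = Suc (sum_list \<xi>')"
  shows "card {T \<in> Std_s \<xi>. T c = sum_list \<xi>} = card (Std_s \<xi>')"
proof (rule bij_betw_same_card[of "\<lambda>T. T(c := 0)"], rule bij_betw_byWitness[where f' = "\<lambda>T. T(c := sum_list \<xi>)"])
  show "\<forall>T\<in>Std_s \<xi>'. (T(c := sum_list \<xi>))(c := 0) = T"
    using assms(1,3) unfolding Std_s_def by (auto intro!: ext)
  show "(\<lambda>T. T(c := 0)) ` {T \<in> Std_s \<xi>. T c = sum_list \<xi>} \<subseteq> Std_s \<xi>'"
    using Std_s_remove_max assms by blast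
  show "(\<lambda>T. T(c := sum_list \<xi>)) ` Std_s \<xi>' \<subseteq> {T \<in> Std_s \<xi>. T c = sum_list \<xi>}"
    using Std_s_insert_max assms by fastforce
qed auto

lemma Std_s_max_exists:
  assumes T: "T \<in> Std_s \<xi>" and nonempty: "sum_list \<xi> \<noteq> 0"
  obtains x where "x \<in> shifted_diagram \<xi>" "T x = sum_list \<xi>"
proof -
  have "1 \<le> sum_list \<xi>" using nonempty by linarith
  moreover have "T ` shifted_diagram \<xi> = {1..sum_list \<xi>}"
    using T by (simp add: Std_s_def bij_betw_def)
  ultimately show ?thesis using that by (metis atLeastAtMost_iff imageE order_refl)
qed

lemma card_Std_s_sum_max:
  assumes "sum_list \<xi> \<noteq> 0"
  shows "card (Std_s \<xi>) = (\<Sum>c\<in>shifted_diagram \<xi>. card {T \<in> Std_s \<xi>. T c = sum_list \<xi>})"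
proof -
  have "T \<in> (\<Union>c\<in>shifted_diagram \<xi>. {T \<in> Std_s \<xi>. T c = sum_list \<xi>})"
    if T: "T \<in> Std_s \<xi>" for T
    using Std_s_max_exists[OF T assms] T by blast
  then have "Std_s \<xi> = (\<Union>c\<in>shifted_diagram \<xi>. {T \<in> Std_s \<xi>. T c = sum_list \<xi>})"
    by blast
  also have "card \<dots> = (\<Sum>c\<in>shifted_diagram \<xi>. card {T \<in> Std_s \<xi>. T c = sum_list \<xi>})"
  proof (rule card_UN_disjoint[OF finite_shifted_diagram])
    show "\<forall>c\<in>shifted_diagram \<xi>. finite {T \<in> Std_s \<xi>. T c = sum_list \<xi>}"
      using finite_Std_s by simp
    have "c = c'" if "c \<in> shifted_diagram \<xi>" "c' \<in> shifted_diagram \<xi>"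
      "T \<in> Std_s \<xi>" "T c = sum_list \<xi>" "T c' = sum_list \<xi>" for c c' T
    proof -
      have "inj_on T (shifted_diagram \<xi>)" using that(3) by (simp add: Std_s_def bij_betw_def)
      then show ?thesis using that by (metis inj_onD)
    qed
    then show "\<forall>c\<in>shifted_diagram \<xi>. \<forall>c'\<in>shifted_diagram \<xi>. c \<noteq> c' \<longrightarrow>
        {T \<in> Std_s \<xi>. T c = sum_list \<xi>} \<inter> {T \<in> Std_s \<xi>. T c' = sum_list \<xi>} = {}"
      by blast
  qed
  finally show ?thesis .
qed

text \<open>The last cell of row \<open>k + 1\<close>; \<open>k\<close> indexes the list \<open>\<xi>\<close> from \<open>0\<close>, rows are numbered from \<open>1\<close>.\<close>
definition row_end :: "nat list \<Rightarrow> nat \<Rightarrow> nat \<times> nat" where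
  "row_end \<xi> k = (Suc k, k + \<xi> ! k)"

lemma row_end_in_shifted_diagram:
  "strict_partition \<xi> \<Longrightarrow> k < length \<xi> \<Longrightarrow> row_end \<xi> k \<in> shifted_diagram \<xi>"
  unfolding row_end_def mem_shifted_diagram using strict_partition_nth_pos[of \<xi> k] by (simp add: part_nth)

lemma is_corner_row_end:
  assumes st: "strict_partition \<xi>" and k: "k < length \<xi>" and gap: "\<xi> ! k - 1 \<notin> set \<xi>"
  shows "is_corner \<xi> (row_end \<xi> k)"
  unfolding is_corner_def
proof (intro allI impI conjI)
  fix i j assume "(i, j) \<in> shifted_diagram \<xi>"
  then have ij: "1 \<le> i" "i \<le> length \<xi>" "i \<le> j" "j \<le> i + \<xi> ! (i - 1) - 1"
    by (auto simp: mem_shifted_diagram part_nth)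
  then show "i = fst (row_end \<xi> k) \<Longrightarrow> j \<le> snd (row_end \<xi> k)"
    by (auto simp: row_end_def)
  show "i \<le> fst (row_end \<xi> k)" if j: "j = snd (row_end \<xi> k)"
  proof (rule ccontr)
    assume "\<not> i \<le> fst (row_end \<xi> k)"
    then have b: "Suc k \<le> i - 1" "i - 1 < length \<xi>" using ij by (auto simp: row_end_def)
    have "\<xi> ! Suc k \<in> set \<xi>" using b by simp
    then have "\<xi> ! Suc k \<noteq> \<xi> ! k - 1" using gap by metis
    moreover have "\<xi> ! Suc k < \<xi> ! k" using b strict_partition_nth_less[OF st, of k "Suc k"] by simp
    moreover have "\<xi> ! (i - 1) + (i - 1 - Suc k) \<le> \<xi> ! Suc k"
      using strict_partition_nth_gap[OF st b] .
    moreover have "1 \<le> \<xi> ! (i - 1)" using strict_partition_nth_pos[OF st b(2)] .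
    ultimately show False using ij j b by (simp add: row_end_def)
  qed
qed

lemma is_corner_imp_row_end:
  assumes st: "strict_partition \<xi>" and c: "c \<in> shifted_diagram \<xi>" and corner: "is_corner \<xi> c"
  obtains k where "k < length \<xi>" "\<xi> ! k - 1 \<notin> set \<xi>" "c = row_end \<xi> k"
proof -
  obtain i j where cij: "c = (i, j)" by force
  define k where "k = i - 1"
  have i: "1 \<le> i" "i \<le> length \<xi>" "i \<le> j" "j \<le> i + \<xi> ! k - 1"
    using c unfolding cij k_def by (auto simp: mem_shifted_diagram part_nth)
  have k: "k < length \<xi>" "1 \<le> \<xi> ! k" using i k_def strict_partition_nth_pos[OF st] by auto
  have j: "j = k + \<xi> ! k"
  proof (rule ccontr)
    assume "j \<noteq> k + \<xi> ! k"
    then have "(i, Suc j) \<in> shifted_diagram \<xi>" using i k_def by (auto simp: mem_shifted_diagram part_nth)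
    then show False using corner unfolding is_corner_def cij by fastforce
  qed
  have "\<xi> ! k - 1 \<notin> set \<xi>"
  proof
    assume "\<xi> ! k - 1 \<in> set \<xi>"
    then obtain m where m: "m < length \<xi>" "\<xi> ! m = \<xi> ! k - 1" by (auto simp: in_set_conv_nth)
    then have "m = Suc k" using strict_partition_pred_part[OF st k(1) m(1)] k(2) by simp
    then have "(Suc i, j) \<in> shifted_diagram \<xi>"
      using m i j k_def strict_partition_nth_pos[OF st m(1)] by (auto simp: mem_shifted_diagram part_nth; linarith)
    then show False using corner unfolding is_corner_def cij by fastforce
  qed
  moreover have "c = row_end \<xi> k" unfolding cij row_end_def using j k_def i by simp
  ultimately show ?thesis using that k by blast
qed

definition remove_row_end :: "nat list \<Rightarrow> nat \<Rightarrow> nat list" where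
  "remove_row_end \<xi> k = (if \<xi> ! k = 1 then butlast \<xi> else \<xi>[k := \<xi> ! k - 1])"

lemma remove_row_end_last_row:
  assumes st: "strict_partition \<xi>" and k: "k < length \<xi>" and one: "\<xi> ! k = 1"
  shows "strict_partition (remove_row_end \<xi> k)"
    and "shifted_diagram (remove_row_end \<xi> k) = shifted_diagram \<xi> - {row_end \<xi> k}"
    and "sum_list \<xi> = Suc (sum_list (remove_row_end \<xi> k))"
    and "set (remove_row_end \<xi> k) = set \<xi> - {1}"
proof -
  have last: "k = length \<xi> - 1"
  proof (rule ccontr)
    assume "k \<noteq> length \<xi> - 1"
    then have "Suc k < length \<xi>" using k by simp
    then show False
      using strict_partition_nth_less[OF st, of k "Suc k"] strict_partition_nth_pos[OF st, of "Suc k"] one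
      by simp
  qed
  define ys where "ys = butlast \<xi>"
  have xs: "\<xi> = ys @ [1]" unfolding ys_def using k last one
    by (metis append_butlast_last_id last_conv_nth length_greater_0_conv list.size(3) not_less0)
  have r: "remove_row_end \<xi> k = ys" unfolding remove_row_end_def ys_def using one by simp
  have "distinct (ys @ [1])" using strict_partition_distinct[OF st] xs by simp
  then show "set (remove_row_end \<xi> k) = set \<xi> - {1}" using r xs by auto
  have "strict_partition ys"
    using st unfolding strict_partition_def xs by (simp add: sorted_wrt_append)
  then show "strict_partition (remove_row_end \<xi> k)" using r by simp
  show "sum_list \<xi> = Suc (sum_list (remove_row_end \<xi> k))" using r xs by simp
  have part: "part \<xi> i = (if i \<le> length ys then part ys i else if i = Suc (length ys) then 1 else 0)" for i
    unfolding xs part_def by (auto simp: nth_append)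
  have corner: "row_end \<xi> k = (Suc (length ys), Suc (length ys))"
    unfolding row_end_def using xs last one by simp
  have length: "length \<xi> = Suc (length ys)" using xs by simp
  show "shifted_diagram (remove_row_end \<xi> k) = shifted_diagram \<xi> - {row_end \<xi> k}"
  proof (intro set_eqI)
    fix x :: "nat \<times> nat"
    show "x \<in> shifted_diagram (remove_row_end \<xi> k) \<longleftrightarrow> x \<in> shifted_diagram \<xi> - {row_end \<xi> k}"
      unfolding r corner Diff_iff by (cases x) (simp only: mem_shifted_diagram part length; auto)
  qed
qed

lemma remove_row_end_decrement:
  assumes st: "strict_partition \<xi>" and k: "k < length \<xi>" and not_one: "\<xi> ! k \<noteq> 1"
    and gap: "\<xi> ! k - 1 \<notin> set \<xi>"
  shows "strict_partition (remove_row_end \<xi> k)"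
    and "shifted_diagram (remove_row_end \<xi> k) = shifted_diagram \<xi> - {row_end \<xi> k}"
    and "sum_list \<xi> = Suc (sum_list (remove_row_end \<xi> k))"
    and "set (remove_row_end \<xi> k) = insert (\<xi> ! k - 1) (set \<xi> - {\<xi> ! k})"
proof -
  define v where "v = \<xi> ! k"
  have v: "2 \<le> v" using not_one strict_partition_nth_pos[OF st k] v_def by simp
  define ys where "ys = \<xi>[k := v - 1]"
  have r: "remove_row_end \<xi> k = ys" unfolding remove_row_end_def ys_def v_def using not_one by simp
  have "sorted_wrt (>) ys"
    unfolding sorted_wrt_iff_nth_less
  proof (intro allI impI)
    fix i j assume ij: "i < j" "j < length ys"
    then have "\<xi> ! j < \<xi> ! i" using strict_partition_nth_less[OF st, of i j] by (simp add: ys_def)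
    moreover have "\<xi> ! j \<noteq> \<xi> ! k - 1"
      using gap nth_mem[of j \<xi>] ij unfolding ys_def by (metis length_list_update)
    ultimately show "ys ! j < ys ! i" using ij gap unfolding ys_def v_def by (cases "i = k"; cases "j = k") auto
  qed
  moreover have "0 \<notin> set ys"
    using set_update_subset_insert[of \<xi> k "v - 1"] st v unfolding ys_def strict_partition_def by auto
  ultimately show "strict_partition (remove_row_end \<xi> k)"
    unfolding r strict_partition_def by simp
  show "set (remove_row_end \<xi> k) = insert (\<xi> ! k - 1) (set \<xi> - {\<xi> ! k})"
    unfolding r ys_def v_def using set_update_distinct[OF strict_partition_distinct[OF st] k] by simp
  have "sum_list ys = sum_list \<xi> + (v - 1) - v" unfolding ys_def v_def by (rule sum_list_update[OF k])
  moreover have "v \<le> sum_list \<xi>" unfolding v_def by (rule elem_le_sum_list[OF k])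
  ultimately show "sum_list \<xi> = Suc (sum_list (remove_row_end \<xi> k))" using r v by simp
  have part: "part ys i = (if i = Suc k then v - 1 else part \<xi> i)" for i
    unfolding ys_def part_def using k by auto
  have "part \<xi> (Suc k) = v" "length ys = length \<xi>" "row_end \<xi> k = (Suc k, k + v)"
    using k by (simp_all add: part_def ys_def v_def row_end_def)
  then show "shifted_diagram (remove_row_end \<xi> k) = shifted_diagram \<xi> - {row_end \<xi> k}"
    unfolding r using v k by (auto simp: mem_shifted_diagram part split: if_splits)
qed

lemma remove_row_end:
  assumes "strict_partition \<xi>" and "k < length \<xi>" and "\<xi> ! k - 1 \<notin> set \<xi>"
  shows "strict_partition (remove_row_end \<xi> k)"
    and "shifted_diagram (remove_row_end \<xi> k) = shifted_diagram \<xi> - {row_end \<xi> k}"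
    and "sum_list \<xi> = Suc (sum_list (remove_row_end \<xi> k))"
    and "schur_formula (set (remove_row_end \<xi> k)) = schur_formula (insert (\<xi> ! k - 1) (set \<xi> - {\<xi> ! k}))"
proof -
  have "0 \<notin> set \<xi> - {1}" using assms(1) by (simp add: strict_partition_def)
  then show "strict_partition (remove_row_end \<xi> k)"
    and "shifted_diagram (remove_row_end \<xi> k) = shifted_diagram \<xi> - {row_end \<xi> k}"
    and "sum_list \<xi> = Suc (sum_list (remove_row_end \<xi> k))"
    and "schur_formula (set (remove_row_end \<xi> k)) = schur_formula (insert (\<xi> ! k - 1) (set \<xi> - {\<xi> ! k}))"
    using remove_row_end_last_row[OF assms(1,2)] remove_row_end_decrement[OF assms(1,2) _ assms(3)]
    by (cases "\<xi> ! k = 1"; simp add: schur_formula_insert_0)+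
qed

lemma card_Std_s_recursion:
  assumes st: "strict_partition \<xi>" and nonempty: "\<xi> \<noteq> []"
  shows "card (Std_s \<xi>)
    = (\<Sum>k\<in>{k. k < length \<xi> \<and> \<xi> ! k - 1 \<notin> set \<xi>}. card (Std_s (remove_row_end \<xi> k)))"
proof -
  define K where "K = {k. k < length \<xi> \<and> \<xi> ! k - 1 \<notin> set \<xi>}"
  define N where "N = sum_list \<xi>"
  have "N \<noteq> 0" unfolding N_def using nonempty st
    by (metis elem_le_sum_list le_zero_eq length_greater_0_conv not_one_le_zero strict_partition_nth_pos)
  then have "card (Std_s \<xi>) = (\<Sum>c\<in>shifted_diagram \<xi>. card {T \<in> Std_s \<xi>. T c = N})"
    unfolding N_def by (rule card_Std_s_sum_max)
  also have "\<dots> = (\<Sum>c\<in>row_end \<xi> ` K. card {T \<in> Std_s \<xi>. T c = N})"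
  proof (rule sum.mono_neutral_right[OF finite_shifted_diagram])
    show "row_end \<xi> ` K \<subseteq> shifted_diagram \<xi>"
      unfolding K_def using row_end_in_shifted_diagram[OF st] by auto
    have "card {T \<in> Std_s \<xi>. T c = N} = 0" if "c \<in> shifted_diagram \<xi> - row_end \<xi> ` K" for c
    proof -
      have "{T \<in> Std_s \<xi>. T c = N} = {}"
        using that Std_s_max_is_corner is_corner_imp_row_end[OF st] unfolding K_def N_def by blast
      then show ?thesis by (metis card.empty)
    qed
    then show "\<forall>c\<in>shifted_diagram \<xi> - row_end \<xi> ` K. card {T \<in> Std_s \<xi>. T c = N} = 0"
      by blast
  qed
  also have "\<dots> = (\<Sum>k\<in>K. card {T \<in> Std_s \<xi>. T (row_end \<xi> k) = N})"
    by (rule sum.reindex[unfolded comp_def]) (simp add: inj_on_def row_end_def)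
  also have "\<dots> = (\<Sum>k\<in>K. card (Std_s (remove_row_end \<xi> k)))"
  proof (rule sum.cong[OF refl])
    fix k assume "k \<in> K"
    then have k: "k < length \<xi>" "\<xi> ! k - 1 \<notin> set \<xi>" unfolding K_def by auto
    show "card {T \<in> Std_s \<xi>. T (row_end \<xi> k) = N} = card (Std_s (remove_row_end \<xi> k))"
      unfolding N_def using remove_row_end[OF st k] row_end_in_shifted_diagram[OF st k(1)]
        is_corner_row_end[OF st k] by (intro card_Std_s_max_at_corner) auto
  qed
  finally show ?thesis unfolding K_def .
qed

lemma Std_s_Nil: "Std_s [] = {\<lambda>_. 0}"
  unfolding Std_s_def by (auto simp: shifted_diagram_Nil bij_betw_def)

lemma card_Std_s_eq_schur_formula:
  "strict_partition \<xi> \<Longrightarrow> real (card (Std_s \<xi>)) = schur_formula (set \<xi>)"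
proof (induction "sum_list \<xi>" arbitrary: \<xi> rule: less_induct)
  case less
  show ?case
  proof (cases "\<xi> = []")
    case True
    then show ?thesis by (simp add: Std_s_Nil schur_formula_def schur_pair_prod_def)
  next
    case False
    define K where "K = {k. k < length \<xi> \<and> \<xi> ! k - 1 \<notin> set \<xi>}"
    have pos: "0 \<notin> set \<xi>" using less.prems by (simp add: strict_partition_def)
    have "real (card (Std_s \<xi>)) = (\<Sum>k\<in>K. real (card (Std_s (remove_row_end \<xi> k))))"
      unfolding card_Std_s_recursion[OF less.prems False] K_def by simp
    also have "\<dots> = (\<Sum>k\<in>K. schur_formula (insert (\<xi> ! k - 1) (set \<xi> - {\<xi> ! k})))"
    proof (rule sum.cong[OF refl])
      fix k assume "k \<in> K"
      then have k: "k < length \<xi>" "\<xi> ! k - 1 \<notin> set \<xi>" unfolding K_def by auto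
      show "real (card (Std_s (remove_row_end \<xi> k))) = schur_formula (insert (\<xi> ! k - 1) (set \<xi> - {\<xi> ! k}))"
        using remove_row_end[OF less.prems k] by (simp add: less.hyps)
    qed
    also have "\<dots> = (\<Sum>s\<in>{s \<in> set \<xi>. s - 1 \<notin> set \<xi>}. schur_formula (insert (s - 1) (set \<xi> - {s})))"
    proof (rule sym, rule sum.reindex_cong)
      show "inj_on ((!) \<xi>) K"
        using nth_eq_iff_index_eq[OF strict_partition_distinct[OF less.prems]] unfolding K_def by (auto simp: inj_on_def)
      show "{s \<in> set \<xi>. s - 1 \<notin> set \<xi>} = (!) \<xi> ` K"
        unfolding K_def by (auto simp: in_set_conv_nth)
    qed simp
    also have "\<dots> = schur_formula (set \<xi>)"
      using schur_formula_recursion[of "set \<xi>"] False pos by simp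
    finally show ?thesis .
  qed
qed

section \<open>Shifted hook lengths\<close>

lemma shifted_diagram_Cons_iff:
  "(x, y) \<in> shifted_diagram (a # \<xi>) \<longleftrightarrow>
     (x = 1 \<and> 1 \<le> y \<and> y \<le> a) \<or> (2 \<le> x \<and> 1 \<le> y \<and> (x - 1, y - 1) \<in> shifted_diagram \<xi>)"
proof (cases x)
  case (Suc x')
  then show ?thesis by (cases x') (auto simp: mem_shifted_diagram part_def)
qed (simp add: mem_shifted_diagram)

definition shift_cell :: "nat \<times> nat \<Rightarrow> nat \<times> nat" where
  "shift_cell = (\<lambda>(i, j). (Suc i, Suc j))"

lemma inj_on_shift_cell: "inj_on shift_cell A"
  by (rule inj_onI) (auto simp: shift_cell_def split: prod.splits)

lemma shifted_diagram_Cons_filter: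
  assumes "\<And>x y. P x y \<Longrightarrow> 2 \<le> x"
  shows "{(x, y). (x, y) \<in> shifted_diagram (a # \<xi>) \<and> P x y}
    = shift_cell ` {(x, y). (x, y) \<in> shifted_diagram \<xi> \<and> P (Suc x) (Suc y)}"
proof (intro equalityI subsetI)
  fix z assume "z \<in> {(x, y). (x, y) \<in> shifted_diagram (a # \<xi>) \<and> P x y}"
  then obtain x y where z: "z = (x, y)" "(x, y) \<in> shifted_diagram (a # \<xi>)" "P x y" by auto
  moreover from z have "2 \<le> x" using assms by blast
  ultimately have "2 \<le> x" "1 \<le> y" "(x - 1, y - 1) \<in> shifted_diagram \<xi>"
    using shifted_diagram_Cons_iff by auto
  moreover have "z = shift_cell (x - 1, y - 1)" using z calculation by (auto simp: shift_cell_def)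
  ultimately show "z \<in> shift_cell ` {(x, y). (x, y) \<in> shifted_diagram \<xi> \<and> P (Suc x) (Suc y)}"
    using z by (auto intro!: image_eqI[of _ _ "(x - 1, y - 1)"])
next
  fix z assume "z \<in> shift_cell ` {(x, y). (x, y) \<in> shifted_diagram \<xi> \<and> P (Suc x) (Suc y)}"
  then obtain x y where z: "z = (Suc x, Suc y)" "(x, y) \<in> shifted_diagram \<xi>" "P (Suc x) (Suc y)"
    by (auto simp: shift_cell_def)
  moreover have "1 \<le> x" using z(2) by (simp add: mem_shifted_diagram)
  ultimately have "(Suc x, Suc y) \<in> shifted_diagram (a # \<xi>)"
    by (simp add: shifted_diagram_Cons_iff)
  then show "z \<in> {(x, y). (x, y) \<in> shifted_diagram (a # \<xi>) \<and> P x y}" using z by auto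
qed

lemma shifted_diagram_Cons:
  "shifted_diagram (a # \<xi>) = (\<lambda>j. (1, j)) ` {1..a} \<union> shift_cell ` shifted_diagram \<xi>"
proof -
  have "shifted_diagram (a # \<xi>)
      = {(x, y). (x, y) \<in> shifted_diagram (a # \<xi>) \<and> x = 1}
        \<union> {(x, y). (x, y) \<in> shifted_diagram (a # \<xi>) \<and> 2 \<le> x}"
    by (auto simp: mem_shifted_diagram)
  also have "{(x, y). (x, y) \<in> shifted_diagram (a # \<xi>) \<and> 2 \<le> x}
      = shift_cell ` {(x, y). (x, y) \<in> shifted_diagram \<xi> \<and> 2 \<le> Suc x}"
    by (rule shifted_diagram_Cons_filter) auto
  also have "{(x, y). (x, y) \<in> shifted_diagram \<xi> \<and> 2 \<le> Suc x} = shifted_diagram \<xi>"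
    by (auto simp: mem_shifted_diagram)
  also have "{(x, y). (x, y) \<in> shifted_diagram (a # \<xi>) \<and> x = 1} = (\<lambda>j. (1, j)) ` {1..a}"
    using shifted_diagram_Cons_iff by auto
  finally show ?thesis .
qed

lemma shifted_hook_Cons:
  assumes "(i, j) \<in> shifted_diagram \<xi>"
  shows "shifted_hook (a # \<xi>) (Suc i) (Suc j) = shift_cell ` shifted_hook \<xi> i j"
proof -
  have ij: "1 \<le> i" "1 \<le> j" using assms by (auto simp: mem_shifted_diagram)
  have diagonal: "(Suc j, Suc j) \<in> shifted_diagram (a # \<xi>) \<longleftrightarrow> (j, j) \<in> shifted_diagram \<xi>"
    using shifted_diagram_Cons_iff ij by simp
  have arm: "{(x, y). (x, y) \<in> shifted_diagram (a # \<xi>) \<and> x = Suc i \<and> y > Suc j}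
      = shift_cell ` {(x, y). (x, y) \<in> shifted_diagram \<xi> \<and> x = i \<and> y > j}"
    using shifted_diagram_Cons_filter[of "\<lambda>x y. x = Suc i \<and> y > Suc j" a \<xi>] ij by simp
  have leg: "{(x, y). (x, y) \<in> shifted_diagram (a # \<xi>) \<and> y = Suc j \<and> x > Suc i}
      = shift_cell ` {(x, y). (x, y) \<in> shifted_diagram \<xi> \<and> y = j \<and> x > i}"
    using shifted_diagram_Cons_filter[of "\<lambda>x y. y = Suc j \<and> x > Suc i" a \<xi>] ij by simp
  have wrap: "{(x, y). (x, y) \<in> shifted_diagram (a # \<xi>) \<and> x = Suc j + 1}
      = shift_cell ` {(x, y). (x, y) \<in> shifted_diagram \<xi> \<and> x = j + 1}"
    using shifted_diagram_Cons_filter[of "\<lambda>x y. x = Suc j + 1" a \<xi>] ij by simp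
  show ?thesis
    unfolding shifted_hook_def image_Un diagonal
    by (simp only: arm leg wrap if_distrib[of "image shift_cell"] image_empty) (simp add: shift_cell_def)
qed

lemma shifted_hook_length_Cons:
  "(i, j) \<in> shifted_diagram \<xi> \<Longrightarrow>
    shifted_hook_length (a # \<xi>) (Suc i) (Suc j) = shifted_hook_length \<xi> i j"
  unfolding shifted_hook_length_def
  by (simp add: shifted_hook_Cons card_image inj_on_shift_cell)

definition shifted_hook_prod :: "nat list \<Rightarrow> real" where
  "shifted_hook_prod \<xi> = (\<Prod>(i, j)\<in>shifted_diagram \<xi>. real (shifted_hook_length \<xi> i j))"

lemma shifted_hook_prod_Cons:
  "shifted_hook_prod (a # \<xi>) = (\<Prod>j=1..a. real (shifted_hook_length (a # \<xi>) 1 j)) * shifted_hook_prod \<xi>"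
proof -
  define h where "h = (\<lambda>(i, j). real (shifted_hook_length (a # \<xi>) i j))"
  have "(\<lambda>j. (1, j)) ` {1..a} \<inter> shift_cell ` shifted_diagram \<xi> = {}"
    by (auto simp: shift_cell_def mem_shifted_diagram)
  then have "shifted_hook_prod (a # \<xi>) = prod h ((\<lambda>j. (1::nat, j)) ` {1..a}) * prod h (shift_cell ` shifted_diagram \<xi>)"
    unfolding shifted_hook_prod_def h_def shifted_diagram_Cons
    by (intro prod.union_disjoint) (auto simp: finite_shifted_diagram)
  also have "prod h ((\<lambda>j. (1::nat, j)) ` {1..a}) = (\<Prod>j=1..a. real (shifted_hook_length (a # \<xi>) 1 j))"
    by (subst prod.reindex) (auto simp: inj_on_def h_def)
  also have "prod h (shift_cell ` shifted_diagram \<xi>) = shifted_hook_prod \<xi>"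
    unfolding shifted_hook_prod_def
  proof (subst prod.reindex[OF inj_on_shift_cell], rule prod.cong[OF refl])
    fix x assume "x \<in> shifted_diagram \<xi>"
    then show "(h \<circ> shift_cell) x = (case x of (i, j) \<Rightarrow> real (shifted_hook_length \<xi> i j))"
      by (cases x) (simp add: h_def shift_cell_def shifted_hook_length_Cons)
  qed
  finally show ?thesis .
qed

text \<open>The rows \<open>r\<close> of \<open>\<xi>\<close> that, as row \<open>r + 1\<close> of \<open>a # \<xi>\<close>, meet column \<open>j\<close>.\<close>
definition column_rows :: "nat list \<Rightarrow> nat \<Rightarrow> nat set" where
  "column_rows \<xi> j = {r \<in> {1..length \<xi>}. Suc r \<le> j \<and> j \<le> r + part \<xi> r}"

lemma first_row_hook_leg:
  assumes st: "strict_partition \<xi>" and j: "1 \<le> j"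
  shows "{(x, y). (x, y) \<in> shifted_diagram (a # \<xi>) \<and> y = j \<and> 1 < x} = (\<lambda>r. (Suc r, j)) ` column_rows \<xi> j"
proof (intro equalityI subsetI)
  fix z assume "z \<in> {(x, y). (x, y) \<in> shifted_diagram (a # \<xi>) \<and> y = j \<and> 1 < x}"
  then obtain x where z: "z = (Suc (x - 1), j)" "(x - 1, j - 1) \<in> shifted_diagram \<xi>" "2 \<le> x"
    using shifted_diagram_Cons_iff by auto
  then have "x - 1 \<in> column_rows \<xi> j"
    using strict_partition_part_pos[OF st, of "x - 1"] j
    by (auto simp: column_rows_def mem_shifted_diagram; linarith)
  then show "z \<in> (\<lambda>r. (Suc r, j)) ` column_rows \<xi> j" using z by blast
next
  fix z assume "z \<in> (\<lambda>r. (Suc r, j)) ` column_rows \<xi> j"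
  then obtain r where z: "z = (Suc r, j)" and r: "r \<in> column_rows \<xi> j" by auto
  then have "(r, j - 1) \<in> shifted_diagram \<xi>" "1 \<le> r"
    using strict_partition_part_pos[OF st, of r] by (auto simp: column_rows_def mem_shifted_diagram)
  then show "z \<in> {(x, y). (x, y) \<in> shifted_diagram (a # \<xi>) \<and> y = j \<and> 1 < x}"
    using z j by (auto simp: shifted_diagram_Cons_iff)
qed

lemma first_row_hook_wrap:
  assumes j: "1 \<le> j"
  shows "{(x, y). (x, y) \<in> shifted_diagram (a # \<xi>) \<and> x = j + 1} = (\<lambda>y. (Suc j, y)) ` {Suc j..j + part \<xi> j}"
proof (intro equalityI subsetI)
  fix z assume "z \<in> {(x, y). (x, y) \<in> shifted_diagram (a # \<xi>) \<and> x = j + 1}"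
  then obtain y where z: "z = (Suc j, y)" "1 \<le> y" "(j, y - 1) \<in> shifted_diagram \<xi>"
    using shifted_diagram_Cons_iff j by auto
  then have "y \<in> {Suc j..j + part \<xi> j}" by (auto simp: mem_shifted_diagram)
  then show "z \<in> (\<lambda>y. (Suc j, y)) ` {Suc j..j + part \<xi> j}" using z by blast
next
  fix z assume "z \<in> (\<lambda>y. (Suc j, y)) ` {Suc j..j + part \<xi> j}"
  then obtain y where z: "z = (Suc j, y)" and y: "Suc j \<le> y" "y \<le> j + part \<xi> j" by auto
  then have "j \<le> length \<xi>" by (auto simp: part_def split: if_splits)
  then have "(j, y - 1) \<in> shifted_diagram \<xi>" using y j by (auto simp: mem_shifted_diagram)
  then show "z \<in> {(x, y). (x, y) \<in> shifted_diagram (a # \<xi>) \<and> x = j + 1}"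
    using z y j by (auto simp: shifted_diagram_Cons_iff)
qed

lemma first_row_hook_no_wrap:
  assumes st: "strict_partition \<xi>" and j: "1 \<le> j" "j \<le> a"
    and no_wrap: "(j, j) \<notin> shifted_diagram (a # \<xi>)"
  shows "part \<xi> j = 0"
proof -
  have "j \<noteq> 1" using no_wrap j by (auto simp: shifted_diagram_Cons_iff)
  then have "(j - 1, j - 1) \<notin> shifted_diagram \<xi>"
    using no_wrap j by (simp add: shifted_diagram_Cons_iff)
  moreover have "(j - 1, j - 1) \<in> shifted_diagram \<xi>" if "j - 1 \<le> length \<xi>"
  proof -
    have "1 \<le> j - 1" using j \<open>j \<noteq> 1\<close> by simp
    moreover from this have "1 \<le> part \<xi> (j - 1)" using that by (rule strict_partition_part_pos[OF st])
    ultimately show ?thesis unfolding mem_shifted_diagram using that by (intro conjI) linarith+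
  qed
  ultimately have "length \<xi> < j" by linarith
  then show ?thesis by (simp add: part_def)
qed

lemma shifted_hook_length_first_row:
  assumes st: "strict_partition (a # \<xi>)" and j: "1 \<le> j" "j \<le> a"
  shows "shifted_hook_length (a # \<xi>) 1 j = 1 + (a - j) + card (column_rows \<xi> j) + part \<xi> j"
proof -
  define arm where "arm = {(x, y). (x, y) \<in> shifted_diagram (a # \<xi>) \<and> x = 1 \<and> y > j}"
  define leg where "leg = {(x, y). (x, y) \<in> shifted_diagram (a # \<xi>) \<and> y = j \<and> 1 < x}"
  define wrap where "wrap = (if (j, j) \<in> shifted_diagram (a # \<xi>)
    then {(x, y). (x, y) \<in> shifted_diagram (a # \<xi>) \<and> x = j + 1} else {})"
  have hook: "shifted_hook (a # \<xi>) 1 j = {(1, j)} \<union> arm \<union> leg \<union> wrap"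
    unfolding shifted_hook_def arm_def leg_def wrap_def by simp
  have arm: "arm = (\<lambda>y. (1, y)) ` {Suc j..a}"
    unfolding arm_def using shifted_diagram_Cons_iff j by auto
  have leg: "leg = (\<lambda>r. (Suc r, j)) ` column_rows \<xi> j"
    unfolding leg_def using first_row_hook_leg[OF strict_partition_Cons[OF st] j(1)] .
  have wrap_part: "wrap \<subseteq> (\<lambda>y. (Suc j, y)) ` {Suc j..j + part \<xi> j}"
    unfolding wrap_def using first_row_hook_wrap[OF j(1)] by auto
  have card_wrap: "card wrap = part \<xi> j"
  proof (cases "(j, j) \<in> shifted_diagram (a # \<xi>)")
    case True
    then show ?thesis
      unfolding wrap_def first_row_hook_wrap[OF j(1)] by (simp add: card_image inj_on_def)
  next
    case False
    then show ?thesis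
      unfolding wrap_def using first_row_hook_no_wrap[OF strict_partition_Cons[OF st] j] by simp
  qed
  have finite: "finite arm" "finite leg" "finite wrap"
    using wrap_part by (auto simp: arm leg column_rows_def intro: finite_subset)
  have "({(1, j)} \<union> arm \<union> leg) \<inter> wrap = {}"
    using wrap_part j by (auto simp: arm leg column_rows_def)
  then have "card ({(1, j)} \<union> arm \<union> leg \<union> wrap) = card ({(1, j)} \<union> arm \<union> leg) + card wrap"
    using finite by (intro card_Un_disjoint) auto
  also have "card ({(1, j)} \<union> arm \<union> leg) = card ({(1, j)} \<union> arm) + card leg"
    using finite by (intro card_Un_disjoint) (auto simp: arm leg column_rows_def)
  also have "card ({(1, j)} \<union> arm) = 1 + card arm"
    using finite by (simp add: arm image_iff)
  finally have "card ({(1, j)} \<union> arm \<union> leg \<union> wrap) = 1 + card arm + card leg + card wrap" .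
  moreover have "card arm = a - j" "card leg = card (column_rows \<xi> j)"
    unfolding arm leg by (simp_all add: card_image inj_on_def)
  ultimately show ?thesis unfolding shifted_hook_length_def hook card_wrap by simp
qed

lemma column_rows_initial:
  assumes st: "strict_partition \<xi>" and j: "1 \<le> j" "j \<le> length \<xi> + 1"
  shows "column_rows \<xi> j = {1..j - 1}"
proof (intro equalityI subsetI)
  fix r assume r: "r \<in> {1..j - 1}"
  then have "part \<xi> (length \<xi>) + (length \<xi> - r) \<le> part \<xi> r" "1 \<le> part \<xi> (length \<xi>)"
    using j strict_partition_part_gap[OF st, of r "length \<xi>"] strict_partition_part_pos[OF st] by auto
  then show "r \<in> column_rows \<xi> j" using r j by (auto simp: column_rows_def)
qed (auto simp: column_rows_def)

text \<open>Since \<open>r + \<xi>\<^sub>r\<close> decreases in \<open>r\<close>, the rows meeting column \<open>j\<close> form an initial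
  segment; whether or not it contains row \<open>r\<close>, its length is incompatible with the equation.\<close>
lemma first_row_tail_hook_ne:
  assumes st: "strict_partition (a # \<xi>)" and j: "length \<xi> + 2 \<le> j" "j \<le> a"
    and r: "1 \<le> r" "r \<le> length \<xi>"
  shows "1 + (a - j) + card (column_rows \<xi> j) \<noteq> a - part \<xi> r"
proof
  assume eq: "1 + (a - j) + card (column_rows \<xi> j) = a - part \<xi> r"
  have stx: "strict_partition \<xi>" using strict_partition_Cons[OF st] .
  have less: "part \<xi> r < a" using strict_partition_Cons_part_less[OF st r] .
  have finite: "finite (column_rows \<xi> j)" by (simp add: column_rows_def)
  show False
  proof (cases "j \<le> r + part \<xi> r")
    case True
    have "{1..r} \<subseteq> column_rows \<xi> j"
    proof
      fix r' assume "r' \<in> {1..r}"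
      then show "r' \<in> column_rows \<xi> j"
        using True r j strict_partition_part_gap[OF stx, of r' r] by (auto simp: column_rows_def)
    qed
    then have "card {1..r} \<le> card (column_rows \<xi> j)" by (rule card_mono[OF finite])
    then have "r \<le> card (column_rows \<xi> j)" by simp
    then show False using eq j less True by linarith
  next
    case False
    have "column_rows \<xi> j \<subseteq> {1..r - 1}"
    proof
      fix r' assume r': "r' \<in> column_rows \<xi> j"
      show "r' \<in> {1..r - 1}"
      proof (rule ccontr)
        assume "r' \<notin> {1..r - 1}"
        then have "r \<le> r'" using r' by (auto simp: column_rows_def)
        then show False
          using r' False strict_partition_part_gap[OF stx, of r r'] r by (auto simp: column_rows_def)
      qed
    qed
    then have "card (column_rows \<xi> j) \<le> card {1..r - 1}" by (rule card_mono[rotated]) simp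
    then have "card (column_rows \<xi> j) \<le> r - 1" by simp
    then show False using eq j less False r by linarith
  qed
qed

lemma first_row_tail_hook_prod:
  assumes st: "strict_partition (a # \<xi>)"
  shows "(\<Prod>j=length \<xi> + 2..a. 1 + (a - j) + card (column_rows \<xi> j)) * (\<Prod>r=1..length \<xi>. a - part \<xi> r)
    = fact (a - 1)"
proof -
  define l where "l = length \<xi>"
  define h where "h j = 1 + (a - j) + card (column_rows \<xi> j)" for j
  define V where "V = h ` {l + 2..a}"
  define W where "W = (\<lambda>r. a - part \<xi> r) ` {1..l}"
  have stx: "strict_partition \<xi>" using strict_partition_Cons[OF st] .
  have la: "l < a" unfolding l_def using strict_partition_Cons_length_less[OF st] .
  have card_le: "card (column_rows \<xi> j) \<le> l" for j
  proof -
    have "column_rows \<xi> j \<subseteq> {1..l}" by (auto simp: column_rows_def l_def)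
    then show ?thesis using card_mono[of "{1..l}"] by simp
  qed
  have "h j' < h j" if "j \<in> {l + 2..a}" "j' \<in> {l + 2..a}" "j < j'" for j j'
  proof -
    have "column_rows \<xi> j' \<subseteq> column_rows \<xi> j" using that by (auto simp: column_rows_def l_def)
    then have "card (column_rows \<xi> j') \<le> card (column_rows \<xi> j)"
      by (rule card_mono[rotated]) (simp add: column_rows_def)
    then show ?thesis using that by (simp add: h_def)
  qed
  then have inj_h: "inj_on h {l + 2..a}"
    by (metis inj_onI linorder_neq_iff order_less_irrefl)
  have "a - part \<xi> r < a - part \<xi> r'" if "r \<in> {1..l}" "r' \<in> {1..l}" "r < r'" for r r'
    using that strict_partition_part_gap[OF stx, of r r'] strict_partition_Cons_part_less[OF st, of r]
    by (auto simp: l_def)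
  then have inj_w: "inj_on (\<lambda>r. a - part \<xi> r) {1..l}"
    by (metis (no_types, lifting) inj_onI linorder_neq_iff order_less_irrefl)
  have "h j \<in> {1..a - 1}" if "l + 2 \<le> j" "j \<le> a" for j
    using card_le[of j] that unfolding h_def atLeastAtMost_iff by (intro conjI) linarith+
  then have "V \<subseteq> {1..a - 1}" by (auto simp: V_def)
  moreover have "W \<subseteq> {1..a - 1}"
    using strict_partition_part_pos[OF stx] strict_partition_Cons_part_less[OF st]
    by (force simp: W_def l_def)
  moreover have disjoint: "V \<inter> W = {}"
    using first_row_tail_hook_ne[OF st] by (fastforce simp: V_def W_def h_def l_def)
  moreover have "card V = a - (l + 1)" "card W = l"
    unfolding V_def W_def using card_image[OF inj_h] card_image[OF inj_w] by simp_all
  then have "card V + card W = card {1..a - 1}" using la by simp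
  ultimately have "V \<union> W = {1..a - 1}"
    by (intro card_subset_eq) (auto simp: card_Un_disjoint V_def W_def)
  then have "\<Prod>V * \<Prod>W = fact (a - 1)"
    using disjoint by (simp add: prod.union_disjoint[symmetric] V_def W_def fact_prod)
  moreover have "\<Prod>V = prod h {l + 2..a}" "\<Prod>W = (\<Prod>r=1..l. a - part \<xi> r)"
    unfolding V_def W_def using prod.reindex[OF inj_h, of "\<lambda>x. x"] prod.reindex[OF inj_w, of "\<lambda>x. x"]
    by simp_all
  ultimately show ?thesis by (simp add: h_def l_def)
qed

lemma first_row_hook_prod:
  assumes st: "strict_partition (a # \<xi>)"
  shows "(\<Prod>j=1..a. shifted_hook_length (a # \<xi>) 1 j) * (\<Prod>r=1..length \<xi>. a - part \<xi> r)
    = fact a * (\<Prod>r=1..length \<xi>. a + part \<xi> r)"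
proof -
  define l where "l = length \<xi>"
  have stx: "strict_partition \<xi>" using strict_partition_Cons[OF st] .
  have la: "l < a" unfolding l_def using strict_partition_Cons_length_less[OF st] .
  have initial: "shifted_hook_length (a # \<xi>) 1 j = a + part \<xi> j" if "1 \<le> j" "j \<le> l + 1" for j
    using that la shifted_hook_length_first_row[OF st] column_rows_initial[OF stx]
    by (simp add: l_def)
  have tail: "shifted_hook_length (a # \<xi>) 1 j = 1 + (a - j) + card (column_rows \<xi> j)"
    if "l + 2 \<le> j" "j \<le> a" for j
    using that shifted_hook_length_first_row[OF st, of j] by (simp add: l_def part_def)
  have "{1..a} = {1..l} \<union> ({l + 1} \<union> {l + 2..a})" using la by auto
  then have "(\<Prod>j=1..a. shifted_hook_length (a # \<xi>) 1 j)
      = (\<Prod>j=1..l. shifted_hook_length (a # \<xi>) 1 j)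
        * (shifted_hook_length (a # \<xi>) 1 (l + 1) * (\<Prod>j=l + 2..a. shifted_hook_length (a # \<xi>) 1 j))"
    by (simp add: prod.union_disjoint)
  also have "(\<Prod>j=1..l. shifted_hook_length (a # \<xi>) 1 j) = (\<Prod>r=1..l. a + part \<xi> r)"
    by (intro prod.cong refl initial) auto
  also have "shifted_hook_length (a # \<xi>) 1 (l + 1) = a"
    using initial[of "l + 1"] by (simp add: part_def l_def)
  also have "(\<Prod>j=l + 2..a. shifted_hook_length (a # \<xi>) 1 j)
      = (\<Prod>j=l + 2..a. 1 + (a - j) + card (column_rows \<xi> j))"
    by (intro prod.cong refl tail) auto
  finally have "(\<Prod>j=1..a. shifted_hook_length (a # \<xi>) 1 j)
      = (\<Prod>r=1..l. a + part \<xi> r) * (a * (\<Prod>j=l + 2..a. 1 + (a - j) + card (column_rows \<xi> j)))" .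
  moreover have "a * fact (a - 1) = fact a" using la by (simp add: fact_reduce[of a])
  ultimately show ?thesis
    using first_row_tail_hook_prod[OF st] by (simp add: l_def algebra_simps)
qed

lemma shifted_hook_prod_mult_schur_pair_prod:
  "strict_partition \<xi> \<Longrightarrow> shifted_hook_prod \<xi> * schur_pair_prod (set \<xi>) = (\<Prod>s\<in>set \<xi>. fact s)"
proof (induction \<xi>)
  case Nil
  then show ?case by (simp add: shifted_hook_prod_def shifted_diagram_Nil schur_pair_prod_def)
next
  case (Cons a \<xi>)
  have st: "strict_partition \<xi>" using strict_partition_Cons[OF Cons.prems] .
  define S where "S = set \<xi>"
  have aS: "a \<notin> S" "\<forall>t\<in>S. t < a" using Cons.prems unfolding strict_partition_def S_def by auto
  define R where "R = (\<Prod>j=1..a. real (shifted_hook_length (a # \<xi>) 1 j))"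
  have parts: "(\<Prod>r=1..length \<xi>. g (part \<xi> r)) = (\<Prod>t\<in>S. g t)" for g :: "nat \<Rightarrow> real"
    unfolding S_def using prod.reindex_bij_betw[OF bij_betw_part_set[OF st]] .
  define A where "A = (\<Prod>t\<in>S. real (a - t))"
  define B where "B = (\<Prod>t\<in>S. real (a + t))"
  define Q where "Q = (\<Prod>t\<in>S. \<bar>real a - real t\<bar> / (real a + real t))"
  have "R * A = fact a * B"
    using arg_cong[OF first_row_hook_prod[OF Cons.prems], of real]
    unfolding R_def A_def B_def parts[of "\<lambda>t. real (a - t)", symmetric] parts[of "\<lambda>t. real (a + t)", symmetric]
    by (simp add: of_nat_prod)
  moreover have "Q = A / B"
    unfolding Q_def A_def B_def prod_dividef[symmetric] using aS by (intro prod.cong) (auto simp: of_nat_diff)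
  moreover have "B > 0"
    unfolding B_def using aS(2) by (intro prod_pos) (auto simp: add_pos_nonneg)
  ultimately have R: "R * Q = fact a" by simp
  have "shifted_hook_prod (a # \<xi>) * schur_pair_prod (set (a # \<xi>))
      = (R * Q) * (shifted_hook_prod \<xi> * schur_pair_prod S)"
    unfolding shifted_hook_prod_Cons R_def Q_def using schur_pair_prod_insert[OF _ aS(1)] by (simp add: S_def)
  also have "\<dots> = (\<Prod>s\<in>set (a # \<xi>). fact s)"
    unfolding R Cons.IH[OF st, folded S_def] using aS by (simp add: S_def)
  finally show ?case .
qed

theorem shifted_hook_length_formula:
  assumes "strict_partition \<xi>"
  shows "fact (sum_list \<xi>) / shifted_hook_prod \<xi> = schur_formula (set \<xi>)"
proof -
  have "schur_pair_prod (set \<xi>) \<noteq> 0"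
    unfolding schur_pair_prod_def by (auto simp: prod_zero_iff)
  moreover have "sum_list \<xi> = \<Sum>(set \<xi>)"
    using sum_list_distinct_conv_sum_set[OF strict_partition_distinct[OF assms], of "\<lambda>x. x"] by simp
  ultimately show ?thesis
    unfolding schur_formula_def shifted_hook_prod_mult_schur_pair_prod[OF assms, symmetric] by simp
qed

section \<open>Two-row shapes\<close>

lemma schur_formula_pair:
  assumes "s < r"
  shows "schur_formula {r, s} = fact (r + s) / (fact r * fact s) * ((real r - real s) / (real r + real s))"
proof -
  have "schur_pair_prod {s} = 1"
    using schur_pair_prod_insert[of "{}" s] by (simp add: schur_pair_prod_def)
  then have "schur_pair_prod {r, s} = (real r - real s) / (real r + real s)"
    using schur_pair_prod_insert[of "{s}" r] assms by simp
  then show ?thesis using assms by (simp add: schur_formula_def)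
qed

lemma Std_s_two_row_less_iff_max:
  assumes c: "1 \<le> c" "c < b"
  shows "{T \<in> Std_s [b, c]. T (1, b) < T (2, c + 1)} = {T \<in> Std_s [b, c]. T (row_end [b, c] 1) = b + c}"
proof -
  define \<xi> where "\<xi> = [b, c]"
  have st: "strict_partition \<xi>" unfolding \<xi>_def strict_partition_def using c by auto
  have ends: "row_end \<xi> 0 = (1, b)" "row_end \<xi> 1 = (2, c + 1)" unfolding row_end_def \<xi>_def by simp_all
  have cells: "(1, b) \<in> shifted_diagram \<xi>" "(2, c + 1) \<in> shifted_diagram \<xi>"
    using row_end_in_shifted_diagram[OF st, of 0] row_end_in_shifted_diagram[OF st, of 1] ends
    by (simp_all add: \<xi>_def)
  have "{T \<in> Std_s \<xi>. T (1, b) < T (2, c + 1)} = {T \<in> Std_s \<xi>. T (row_end \<xi> 1) = sum_list \<xi>}"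
  proof (intro Collect_cong conj_cong refl iffI)
    fix T assume T: "T \<in> Std_s \<xi>" and less: "T (1, b) < T (2, c + 1)"
    have "sum_list \<xi> \<noteq> 0" unfolding \<xi>_def using c by simp
    then obtain x where x: "x \<in> shifted_diagram \<xi>" "T x = sum_list \<xi>"
      using Std_s_max_exists[OF T] by blast
    then obtain k where k: "k < length \<xi>" "x = row_end \<xi> k"
      using is_corner_imp_row_end[OF st x(1) Std_s_max_is_corner[OF T x]] by blast
    moreover have "k \<noteq> 0"
    proof
      assume "k = 0"
      then have "T (1, b) = sum_list \<xi>" using x k ends by simp
      then show False using less Std_s_range[OF T cells(2)] by simp
    qed
    ultimately have "k = 1" by (simp add: \<xi>_def)
    then show "T (row_end \<xi> 1) = sum_list \<xi>" using x k by simp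
  next
    fix T assume T: "T \<in> Std_s \<xi>" and max: "T (row_end \<xi> 1) = sum_list \<xi>"
    have inj: "inj_on T (shifted_diagram \<xi>)" using T by (simp add: Std_s_def bij_betw_def)
    have "T (1, b) \<noteq> T (2, c + 1)"
    proof
      assume "T (1, b) = T (2, c + 1)"
      then have "(1::nat, b) = (2, c + 1)" using inj_onD[OF inj _ cells] by blast
      then show False by simp
    qed
    then show "T (1, b) < T (2, c + 1)" using max ends Std_s_range[OF T cells(1)] by simp
  qed
  then show ?thesis by (simp add: \<xi>_def)
qed

lemma card_Std_s_two_row:
  assumes c: "1 \<le> c" "c < b"
  shows "real (card {T \<in> Std_s [b, c]. T (1, b) < T (2, c + 1)}) = schur_formula {b, c - 1}"
proof -
  define \<xi> where "\<xi> = [b, c]"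
  have st: "strict_partition \<xi>" unfolding \<xi>_def strict_partition_def using c by auto
  have gap: "\<xi> ! 1 - 1 \<notin> set \<xi>" unfolding \<xi>_def using c by auto
  have "card {T \<in> Std_s \<xi>. T (1, b) < T (2, c + 1)} = card {T \<in> Std_s \<xi>. T (row_end \<xi> 1) = sum_list \<xi>}"
    using Std_s_two_row_less_iff_max[OF c] by (simp add: \<xi>_def)
  also have "\<dots> = card (Std_s (remove_row_end \<xi> 1))"
    using remove_row_end[OF st _ gap] row_end_in_shifted_diagram[OF st] is_corner_row_end[OF st _ gap]
    by (intro card_Std_s_max_at_corner) (auto simp: \<xi>_def)
  finally have "real (card {T \<in> Std_s \<xi>. T (1, b) < T (2, c + 1)}) = schur_formula (set (remove_row_end \<xi> 1))"
    using card_Std_s_eq_schur_formula remove_row_end(1)[OF st _ gap] by (simp add: \<xi>_def)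
  also have "\<dots> = schur_formula {b, c - 1}"
  proof -
    have "insert (c - 1) ({b, c} - {c}) = {b, c - 1}" using c by auto
    then show ?thesis using remove_row_end(4)[OF st _ gap] by (simp add: \<xi>_def)
  qed
  finally show ?thesis unfolding \<xi>_def .
qed

lemma card_Std_s_p_two_row:
  assumes u: "1 \<le> u" "2 * u + 3 \<le> p"
  shows "real (card (Std_s_p p [p - u, u]))
    = (real p - 2 * real u + 1) / (real p - real u) * real ((p - 2) choose (u - 1))"
proof -
  have "Std_s_p p [p - u, u] = {T \<in> Std_s [p - u, u]. T (1, p - u) < T (2, u + 1)}"
    unfolding Std_s_p_def using u by (auto simp: part_def)
  then have "real (card (Std_s_p p [p - u, u])) = schur_formula {p - u, u - 1}"
    using card_Std_s_two_row[of u "p - u"] u by simp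
  also have "\<dots> = fact (p - 1) / (fact (p - u) * fact (u - 1)) * ((real p - 2 * real u + 1) / (real p - 1))"
    using u by (subst schur_formula_pair) (simp_all add: of_nat_diff)
  also have "\<dots> = (real p - 2 * real u + 1) / (real p - real u) * real ((p - 2) choose (u - 1))"
  proof -
    have "Suc (p - 2) = p - 1" "Suc (p - u - 1) = p - u" using u by simp_all
    then have "fact (p - 1) = real (p - 1) * fact (p - 2)" "fact (p - u) = real (p - u) * fact (p - u - 1)"
      by (metis fact_Suc)+
    moreover have "real (p - 1) = real p - 1" "real (p - u) = real p - real u"
      using u by (simp_all add: of_nat_diff)
    ultimately have p1: "fact (p - 1) = (real p - 1) * fact (p - 2)"
      and pu: "fact (p - u) = (real p - real u) * fact (p - u - 1)" by simp_all
    have "u - 1 \<le> p - 2" "p - 2 - (u - 1) = p - u - 1" using u by simp_all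
    then have binomial: "real ((p - 2) choose (u - 1)) = fact (p - 2) / (fact (u - 1) * fact (p - u - 1))"
      using binomial_fact[of "u - 1" "p - 2"] by simp
    have cancel: "B * X / (C * Z * Y) * (A / B) = A / C * (X / (Y * Z))"
      if "B \<noteq> 0" "C \<noteq> 0" "Y \<noteq> 0" "Z \<noteq> 0" for A B C X Y Z :: real
      using that by (simp add: field_simps)
    show ?thesis unfolding p1 pu binomial by (rule cancel) (use u in simp_all)
  qed
  finally show ?thesis .
qed

lemma Std_s_p_eq_Std_s:
  assumes st: "strict_partition \<xi>" and size: "sum_list \<xi> \<le> p"
    and not_two_row: "\<nexists>u. 1 \<le> u \<and> 2 * u + 3 \<le> p \<and> \<xi> = [p - u, u]"
  shows "Std_s_p p \<xi> = Std_s \<xi>"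
proof -
  have "\<not> (1 \<le> u \<and> 2 * u + 3 \<le> p \<and> part \<xi> 1 = p - u \<and> part \<xi> 2 = u)" for u
  proof
    assume u: "1 \<le> u \<and> 2 * u + 3 \<le> p \<and> part \<xi> 1 = p - u \<and> part \<xi> 2 = u"
    then have "2 \<le> length \<xi>" by (auto simp: part_def split: if_splits)
    then obtain x y rest where "\<xi> = x # y # rest" by (cases \<xi>; cases "tl \<xi>") auto
    then have \<xi>: "\<xi> = [p - u, u] @ rest" using u by (simp add: part_def)
    then have "rest = []"
      using size st u by (cases rest) (auto simp: strict_partition_def)
    then show False using not_two_row u \<xi> by auto
  qed
  then show ?thesis unfolding Std_s_p_def by auto
qed

theorem proposition3p21:
  fixes p n :: nat and \<xi> :: "nat list"
  assumes "prime p" and "p \<ge> 3" and "n \<le> p" and "\<xi> \<in> CPs p n"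
  shows "(\<forall>u. 1 \<le> u \<and> 2 * u + 3 \<le> p \<and> \<xi> = [p - u, u] \<longrightarrow>
            real (card (Std_s_p p \<xi>)) =
              (real n - 2 * real u + 1) / (real n - real u) * real ((n - 2) choose (u - 1)))
       \<and> ((\<nexists>u. 1 \<le> u \<and> 2 * u + 3 \<le> p \<and> \<xi> = [p - u, u]) \<longrightarrow>
            real (card (Std_s_p p \<xi>)) =
              fact n / (\<Prod>(i, j)\<in>shifted_diagram \<xi>. real (shifted_hook_length \<xi> i j)))"
proof (intro conjI allI impI)
  have st: "strict_partition \<xi>" and size: "sum_list \<xi> = n"
    using assms(4) by (simp_all add: CPs_def SP_iff)
  show "real (card (Std_s_p p \<xi>)) =
      (real n - 2 * real u + 1) / (real n - real u) * real ((n - 2) choose (u - 1))"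
    if "1 \<le> u \<and> 2 * u + 3 \<le> p \<and> \<xi> = [p - u, u]" for u
    using that card_Std_s_p_two_row[of u p] size by auto
  show "real (card (Std_s_p p \<xi>)) = fact n / (\<Prod>(i, j)\<in>shifted_diagram \<xi>. real (shifted_hook_length \<xi> i j))"
    if "\<nexists>u. 1 \<le> u \<and> 2 * u + 3 \<le> p \<and> \<xi> = [p - u, u]"
    using Std_s_p_eq_Std_s[OF st _ that] card_Std_s_eq_schur_formula[OF st]
      shifted_hook_length_formula[OF st] size assms(3)
    by (simp add: shifted_hook_prod_def)
qed

end
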